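(* Let $\Pi$ be an indecomposable reduced crystallographic root system. Let $\gamma \in \Pi_+$, $\alpha \in \Delta$ and an integer $c > 0$ be such that $\gamma - c\alpha \in \Pi_+$. Let $\beta \in \Pi_+$ satisfy $\beta \le \gamma$, $c_\alpha(\beta) = c_\alpha(\gamma)$ and $\beta \neq \alpha$. Then $\beta - c\alpha \in \Pi_+$.
   Context: $\Delta$ denotes the simple roots and $\Pi_+$ the positive roots. For a root $\beta$, $c_\alpha(\beta)$ is the coefficient of $\alpha$ in the expansion $\beta = \sum_{\alpha\in\Delta} c_\alpha(\beta)\alpha$. $\beta\le\gamma$ iff $\gamma-\beta$ is a nonnegative integer combination of simple roots. *)

theory Defs
  imports "HOL-Analysis.Analysis"
begin

definition refl_root :: "'a::euclidean_space \<Rightarrow> 'a \<Rightarrow> 'a" where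
  "refl_root \<alpha> x = x - (2 * (x \<bullet> \<alpha>) / (\<alpha> \<bullet> \<alpha>)) *\<^sub>R \<alpha>"

definition root_system :: "'a::euclidean_space set \<Rightarrow> bool" where
  "root_system \<Phi> \<longleftrightarrow> finite \<Phi> \<and> 0 \<notin> \<Phi> \<and> span \<Phi> = UNIV \<and>
     (\<forall>\<alpha>\<in>\<Phi>. refl_root \<alpha> ` \<Phi> = \<Phi>)"

definition crystallographic :: "'a::euclidean_space set \<Rightarrow> bool" where
  "crystallographic \<Phi> \<longleftrightarrow> (\<forall>\<alpha>\<in>\<Phi>. \<forall>\<beta>\<in>\<Phi>. 2 * (\<beta> \<bullet> \<alpha>) / (\<alpha> \<bullet> \<alpha>) \<in> \<int>)"

definition reduced :: "'a::euclidean_space set \<Rightarrow> bool" where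
  "reduced \<Phi> \<longleftrightarrow> (\<forall>\<alpha>\<in>\<Phi>. \<forall>c::real. c *\<^sub>R \<alpha> \<in> \<Phi> \<longrightarrow> c = 1 \<or> c = -1)"

definition indecomposable :: "'a::euclidean_space set \<Rightarrow> bool" where
  "indecomposable \<Phi> \<longleftrightarrow> \<Phi> \<noteq> {} \<and>
     \<not> (\<exists>A B. A \<noteq> {} \<and> B \<noteq> {} \<and> A \<union> B = \<Phi> \<and> A \<inter> B = {} \<and>
            (\<forall>a\<in>A. \<forall>b\<in>B. a \<bullet> b = 0))"

definition nonneg_comb :: "'a::euclidean_space set \<Rightarrow> 'a \<Rightarrow> bool" where
  "nonneg_comb \<Delta> v \<longleftrightarrow> (\<exists>k::'a \<Rightarrow> nat. v = (\<Sum>\<alpha>\<in>\<Delta>. real (k \<alpha>) *\<^sub>R \<alpha>))"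

definition is_base :: "'a::euclidean_space set \<Rightarrow> 'a set \<Rightarrow> bool" where
  "is_base \<Phi> \<Delta> \<longleftrightarrow> \<Delta> \<subseteq> \<Phi> \<and> independent \<Delta> \<and>
     (\<forall>\<beta>\<in>\<Phi>. nonneg_comb \<Delta> \<beta> \<or> nonneg_comb \<Delta> (- \<beta>))"

definition pos_roots :: "'a::euclidean_space set \<Rightarrow> 'a set \<Rightarrow> 'a set" where
  "pos_roots \<Phi> \<Delta> = {\<beta>\<in>\<Phi>. nonneg_comb \<Delta> \<beta>}"

definition coeff_root :: "'a::euclidean_space set \<Rightarrow> 'a \<Rightarrow> 'a \<Rightarrow> real" where
  "coeff_root \<Delta> \<alpha> \<beta> = representation \<Delta> \<beta> \<alpha>"

definition root_le :: "'a::euclidean_space set \<Rightarrow> 'a \<Rightarrow> 'a \<Rightarrow> bool" where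
  "root_le \<Delta> \<beta> \<gamma> \<longleftrightarrow> nonneg_comb \<Delta> (\<gamma> - \<beta>)"

end

theory Submission
  imports Defs
begin

text \<open>
  Root strings are unbroken, so \<open>\<gamma> - k\<alpha>\<close> is a root for all \<open>0 \<le> k \<le> c\<close>. The claim is then
  proved for \<open>\<beta>\<close> by induction on the height of \<open>\<gamma> - \<beta>\<close>, a nonnegative combination of simple
  roots without \<open>\<alpha>\<close>. If it is nonzero, some simple root \<open>\<epsilon> \<noteq> \<alpha>\<close> occurring in it satisfies
  \<open>\<epsilon> \<bullet> (\<gamma> - \<beta>) > 0\<close>; hence either \<open>\<gamma> \<bullet> \<epsilon> > 0\<close> and \<open>\<gamma> - \<epsilon>\<close> is a root above \<open>\<beta>\<close>, or
  \<open>\<beta> \<bullet> \<epsilon> < 0\<close> and \<open>\<beta> + \<epsilon>\<close> is a positive root below \<open>\<gamma>\<close>. The \<open>\<alpha>\<close>-chain passes between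
  \<open>w\<close> and \<open>w - \<epsilon>\<close> because, for distinct simple roots \<open>\<alpha>, \<epsilon>\<close>, roots \<open>w, w - \<alpha>, w - \<epsilon>\<close>
  force \<open>w - \<alpha> - \<epsilon>\<close> to be a root or zero.
\<close>

lemma inner_pos_cartan_integers:
  fixes x y :: "'a::real_inner"
  assumes xy: "x \<bullet> y > 0"
    and ints: "2 * (x \<bullet> y) / (y \<bullet> y) \<in> \<int>" "2 * (x \<bullet> y) / (x \<bullet> x) \<in> \<int>"
  shows "2 * (x \<bullet> y) / (y \<bullet> y) = 1 \<or> 2 * (x \<bullet> y) / (x \<bullet> x) = 1 \<or> x = y"
proof -
  define p q where "p = 2 * (x \<bullet> y) / (y \<bullet> y)" and "q = 2 * (x \<bullet> y) / (x \<bullet> x)"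
  have "x \<noteq> 0" "y \<noteq> 0" using xy by auto
  then have x0: "x \<bullet> x > 0" and y0: "y \<bullet> y > 0" by auto
  have "p * q = 4 * (x \<bullet> y)\<^sup>2 / ((x \<bullet> x) * (y \<bullet> y))"
    by (simp add: p_def q_def power2_eq_square field_simps)
  also have "\<dots> \<le> 4"
    using Cauchy_Schwarz_ineq[of x y] x0 y0 by (simp add: field_simps)
  finally have pq: "p * q \<le> 4" .
  show ?thesis
  proof (cases "p = 1 \<or> q = 1")
    case False
    have "p > 0" "q > 0" using xy x0 y0 by (simp_all add: p_def q_def)
    then have "p \<ge> 2" "q \<ge> 2"
      using False ints unfolding p_def [symmetric] q_def [symmetric]
      by (auto elim!: Ints_cases)
    then have "p = 2" "q = 2"
      using pq mult_right_mono[of 2 p q] mult_left_mono[of 2 q p] by linarith+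
    then have "x \<bullet> x = x \<bullet> y" "y \<bullet> y = x \<bullet> y"
      using x0 y0 by (simp_all add: p_def q_def field_simps)
    then have "(x - y) \<bullet> (x - y) = 0"
      by (simp add: inner_diff inner_commute)
    then show ?thesis by simp
  qed (auto simp: p_def q_def)
qed

lemma nat_exists_step:
  assumes "P i" "\<not> P j" "i \<le> j"
  obtains k where "i \<le> k" "k < j" "P k" "\<not> P (Suc k)"
  using dec_induct[of i j P] assms by blast

locale crystallographic_root_system =
  fixes \<Phi> :: "'a::euclidean_space set"
  assumes root_system: "root_system \<Phi>" and crystallographic: "crystallographic \<Phi>"
begin

lemma zero_notin_roots: "0 \<notin> \<Phi>"
  using root_system unfolding root_system_def by blast

lemma refl_root_in_roots: "a \<in> \<Phi> \<Longrightarrow> b \<in> \<Phi> \<Longrightarrow> refl_root a b \<in> \<Phi>"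
  using root_system unfolding root_system_def by blast

lemma uminus_root: assumes "a \<in> \<Phi>" shows "- a \<in> \<Phi>"
proof -
  have "a \<bullet> a \<noteq> 0" using assms zero_notin_roots by auto
  then have "refl_root a a = - a" unfolding refl_root_def by (simp add: scaleR_2)
  then show ?thesis using refl_root_in_roots[OF assms assms] by simp
qed

lemma root_diff_of_inner_pos:
  assumes x: "x \<in> \<Phi>" and y: "y \<in> \<Phi>" and "x \<bullet> y > 0" and "x \<noteq> y"
  shows "x - y \<in> \<Phi>"
proof -
  have "2 * (x \<bullet> y) / (y \<bullet> y) \<in> \<int>" "2 * (x \<bullet> y) / (x \<bullet> x) \<in> \<int>"
    using crystallographic x y unfolding crystallographic_def by (auto simp: inner_commute)
  then consider "2 * (x \<bullet> y) / (y \<bullet> y) = 1" | "2 * (y \<bullet> x) / (x \<bullet> x) = 1"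
    using inner_pos_cartan_integers[of x y] assms(3,4) by (auto simp: inner_commute)
  then show ?thesis
  proof cases
    case 1
    then have "refl_root y x = x - y" unfolding refl_root_def by (simp only: scaleR_one)
    then show ?thesis using refl_root_in_roots[OF y x] by simp
  next
    case 2
    then have "refl_root x y = y - x" unfolding refl_root_def by (simp only: scaleR_one)
    then show ?thesis using uminus_root[OF refl_root_in_roots[OF x y]] by simp
  qed
qed

lemma root_add_of_inner_neg:
  assumes "x \<in> \<Phi>" "y \<in> \<Phi>" "x \<bullet> y < 0" "x \<noteq> - y"
  shows "x + y \<in> \<Phi>"
  using root_diff_of_inner_pos[OF assms(1) uminus_root[OF assms(2)]] assms(3,4) by simp

definition root_chain :: "'a \<Rightarrow> nat \<Rightarrow> 'a \<Rightarrow> bool" where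
  "root_chain a c g \<longleftrightarrow> (\<forall>k\<le>c. g - real k *\<^sub>R a \<in> \<Phi>)"

lemma root_string_unbroken:
  assumes a: "a \<in> \<Phi>" and g: "g \<in> \<Phi>" and gc: "g - real c *\<^sub>R a \<in> \<Phi>"
    and not_multiple: "\<And>r. g \<noteq> r *\<^sub>R a"
  shows "root_chain a c g"
  unfolding root_chain_def
proof (intro allI impI, rule ccontr)
  fix k assume "k \<le> c" "g - real k *\<^sub>R a \<notin> \<Phi>"
  define P where "P k \<longleftrightarrow> g - real k *\<^sub>R a \<in> \<Phi>" for k
  have "\<not> P k" "P 0" "P c" using \<open>g - real k *\<^sub>R a \<notin> \<Phi>\<close> g gc by (simp_all add: P_def)
  obtain k0 where k0: "k0 < k" "P k0" "\<not> P (Suc k0)"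
    using nat_exists_step[of P 0 k] \<open>P 0\<close> \<open>\<not> P k\<close> by blast
  obtain k1 where k1: "k \<le> k1" "\<not> P k1" "P (Suc k1)"
    using nat_exists_step[of "\<lambda>k. \<not> P k" k c] \<open>P c\<close> \<open>\<not> P k\<close> \<open>k \<le> c\<close> by blast
  define x y where "x = g - real k0 *\<^sub>R a" and "y = g - real (Suc k1) *\<^sub>R a"
  have "x \<in> \<Phi>" "x - a \<notin> \<Phi>" "x \<noteq> a"
    using k0 not_multiple[of "real (Suc k0)"] by (auto simp: P_def x_def algebra_simps)
  then have "x \<bullet> a \<le> 0" using root_diff_of_inner_pos[OF _ a] by force
  moreover have "y \<in> \<Phi>" "y + a \<notin> \<Phi>" "y \<noteq> - a"
    using k1 not_multiple[of "real k1"] by (auto simp: P_def y_def algebra_simps)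
  then have "y \<bullet> a \<ge> 0" using root_add_of_inner_neg[OF _ a] by force
  moreover have "x \<bullet> a - y \<bullet> a = (real (Suc k1) - real k0) * (a \<bullet> a)"
    unfolding x_def y_def by (simp add: inner_diff_left algebra_simps)
  moreover have "a \<bullet> a > 0" using a zero_notin_roots by auto
  then have "(real (Suc k1) - real k0) * (a \<bullet> a) > 0"
    using k0 k1 by (intro mult_pos_pos) auto
  ultimately show False by linarith
qed

end

locale reduced_root_system_with_base = crystallographic_root_system +
  fixes \<Delta> :: "'a::euclidean_space set"
  assumes reduced: "reduced \<Phi>" and base: "is_base \<Phi> \<Delta>"
begin

lemma simple_roots_subset: "\<Delta> \<subseteq> \<Phi>"
  and independent_simple_roots: "independent \<Delta>"
  and root_pos_or_neg: "b \<in> \<Phi> \<Longrightarrow> nonneg_comb \<Delta> b \<or> nonneg_comb \<Delta> (- b)"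
  using base unfolding is_base_def by auto

lemma finite_simple_roots: "finite \<Delta>"
  using simple_roots_subset root_system finite_subset unfolding root_system_def by blast

lemma root_multiple_eq: "a \<in> \<Phi> \<Longrightarrow> r *\<^sub>R a \<in> \<Phi> \<Longrightarrow> r = 1 \<or> r = -1"
  using reduced unfolding reduced_def by blast

lemma span_simple_roots: "span \<Delta> = UNIV"
proof -
  have "v \<in> span \<Delta>" if "nonneg_comb \<Delta> v" for v
    using that unfolding nonneg_comb_def by (auto intro: span_sum span_scale span_base)
  then have "\<Phi> \<subseteq> span \<Delta>"
    using root_pos_or_neg span_neg by fastforce
  then have "span \<Phi> \<subseteq> span \<Delta>"
    by (simp add: span_minimal)
  then show ?thesis
    using root_system unfolding root_system_def by auto
qed

lemma coeff_root_add: "coeff_root \<Delta> e (u + v) = coeff_root \<Delta> e u + coeff_root \<Delta> e v"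
  unfolding coeff_root_def
  by (simp add: representation_add independent_simple_roots span_simple_roots)

lemma coeff_root_diff: "coeff_root \<Delta> e (u - v) = coeff_root \<Delta> e u - coeff_root \<Delta> e v"
  unfolding coeff_root_def
  by (simp add: representation_diff independent_simple_roots span_simple_roots)

lemma coeff_root_scaleR: "coeff_root \<Delta> e (r *\<^sub>R v) = r * coeff_root \<Delta> e v"
  unfolding coeff_root_def
  by (simp add: representation_scale independent_simple_roots span_simple_roots)

lemma coeff_root_zero: "coeff_root \<Delta> e 0 = 0"
  using coeff_root_scaleR[of e 0 0] by simp

lemma coeff_root_simple: "d \<in> \<Delta> \<Longrightarrow> coeff_root \<Delta> e d = (if e = d then 1 else 0)"
  unfolding coeff_root_def by (simp add: representation_basis independent_simple_roots)

lemma sum_coeff_root: "(\<Sum>e\<in>\<Delta>. coeff_root \<Delta> e v *\<^sub>R e) = v"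
  unfolding coeff_root_def
  by (simp add: sum_representation_eq independent_simple_roots span_simple_roots finite_simple_roots)

lemma coeff_root_sum_simple:
  "d \<in> \<Delta> \<Longrightarrow> coeff_root \<Delta> d (\<Sum>e\<in>\<Delta>. f e *\<^sub>R e) = f d"
  unfolding coeff_root_def
  by (simp add: representation_sum representation_scale representation_basis
      independent_simple_roots span_simple_roots finite_simple_roots if_distrib cong: if_cong)

lemma eq_zero_if_coeff_root_zero: "(\<And>e. e \<in> \<Delta> \<Longrightarrow> coeff_root \<Delta> e v = 0) \<Longrightarrow> v = 0"
  using sum_coeff_root[of v] by simp

lemma nonneg_comb_iff_coeff_root_Nats:
  "nonneg_comb \<Delta> v \<longleftrightarrow> (\<forall>e\<in>\<Delta>. coeff_root \<Delta> e v \<in> \<nat>)"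
proof
  assume "nonneg_comb \<Delta> v"
  then show "\<forall>e\<in>\<Delta>. coeff_root \<Delta> e v \<in> \<nat>"
    unfolding nonneg_comb_def by (auto simp: coeff_root_sum_simple)
next
  assume nat: "\<forall>e\<in>\<Delta>. coeff_root \<Delta> e v \<in> \<nat>"
  have "v = (\<Sum>e\<in>\<Delta>. real (nat \<lfloor>coeff_root \<Delta> e v\<rfloor>) *\<^sub>R e)"
    by (subst (1) sum_coeff_root[symmetric], rule sum.cong) (use nat in \<open>auto elim!: Nats_cases\<close>)
  then show "nonneg_comb \<Delta> v"
    unfolding nonneg_comb_def by (rule exI[where x = "\<lambda>e. nat \<lfloor>coeff_root \<Delta> e v\<rfloor>"])
qed

lemma nonneg_comb_coeff_root_nonneg: "nonneg_comb \<Delta> v \<Longrightarrow> e \<in> \<Delta> \<Longrightarrow> coeff_root \<Delta> e v \<ge> 0"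
  unfolding nonneg_comb_iff_coeff_root_Nats by (auto elim!: Nats_cases)

lemma nonneg_comb_zero: "nonneg_comb \<Delta> 0"
  unfolding nonneg_comb_iff_coeff_root_Nats by (simp add: coeff_root_zero)

lemma nonneg_comb_add_simple: "nonneg_comb \<Delta> v \<Longrightarrow> e \<in> \<Delta> \<Longrightarrow> nonneg_comb \<Delta> (v + e)"
  unfolding nonneg_comb_iff_coeff_root_Nats by (simp add: coeff_root_add coeff_root_simple)

lemma nonneg_comb_diff_simple:
  assumes v: "nonneg_comb \<Delta> v" and e: "e \<in> \<Delta>" and pos: "coeff_root \<Delta> e v > 0"
  shows "nonneg_comb \<Delta> (v - e)"
  unfolding nonneg_comb_iff_coeff_root_Nats
proof
  fix d assume "d \<in> \<Delta>"
  then obtain n where n: "coeff_root \<Delta> d v = real n"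
    using v unfolding nonneg_comb_iff_coeff_root_Nats by (blast elim: Nats_cases)
  show "coeff_root \<Delta> d (v - e) \<in> \<nat>"
  proof (cases "d = e")
    case True
    then have "coeff_root \<Delta> d (v - e) = real (n - 1)"
      using n pos e by (simp add: coeff_root_diff coeff_root_simple of_nat_diff)
    then show ?thesis by simp
  qed (use n e in \<open>simp add: coeff_root_diff coeff_root_simple\<close>)
qed

lemma nonneg_comb_exists_simple_inner_pos:
  assumes v: "nonneg_comb \<Delta> v" and "v \<noteq> 0"
  obtains e where "e \<in> \<Delta>" "coeff_root \<Delta> e v > 0" "e \<bullet> v > 0"
proof (rule ccontr)
  assume none: "\<not> thesis"
  have "v \<bullet> v = (\<Sum>e\<in>\<Delta>. coeff_root \<Delta> e v * (e \<bullet> v))"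
    by (subst (1) sum_coeff_root[symmetric]) (simp add: inner_sum_left)
  also have "\<dots> \<le> 0"
  proof (rule sum_nonpos)
    fix e assume e: "e \<in> \<Delta>"
    then have "coeff_root \<Delta> e v \<ge> 0" using nonneg_comb_coeff_root_nonneg[OF v] by blast
    then show "coeff_root \<Delta> e v * (e \<bullet> v) \<le> 0"
      using none e that by (metis less_eq_real_def mult_nonneg_nonpos mult_zero_left not_le)
  qed
  finally show False using \<open>v \<noteq> 0\<close> by (metis inner_gt_zero_iff not_le)
qed

definition height :: "'a \<Rightarrow> real" where
  "height v = (\<Sum>e\<in>\<Delta>. coeff_root \<Delta> e v)"

lemma height_diff_simple: "e \<in> \<Delta> \<Longrightarrow> height (v - e) = height v - 1"
  unfolding height_def
  by (simp add: coeff_root_diff coeff_root_simple sum_subtractf finite_simple_roots)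

lemma nonneg_comb_height_Nats:
  assumes "nonneg_comb \<Delta> v"
  shows "height v \<in> \<nat>"
proof -
  obtain k where "v = (\<Sum>e\<in>\<Delta>. real (k e) *\<^sub>R e)"
    using assms unfolding nonneg_comb_def by blast
  then have "height v = real (\<Sum>e\<in>\<Delta>. k e)"
    unfolding height_def by (simp add: coeff_root_sum_simple cong: sum.cong)
  then show ?thesis by (simp only: of_nat_in_Nats)
qed

lemma nonneg_comb_height_zero:
  assumes "nonneg_comb \<Delta> v" "height v = 0"
  shows "v = 0"
proof (rule eq_zero_if_coeff_root_zero)
  show "coeff_root \<Delta> e v = 0" if "e \<in> \<Delta>" for e
    using assms that sum_nonneg_eq_0_iff[OF finite_simple_roots, of "\<lambda>e. coeff_root \<Delta> e v"]
      nonneg_comb_coeff_root_nonneg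
    unfolding height_def by blast
qed

lemma simple_roots_diff_notin_roots:
  assumes a: "a \<in> \<Delta>" and d: "d \<in> \<Delta>" and "a \<noteq> d"
  shows "a - d \<notin> \<Phi>"
proof
  assume "a - d \<in> \<Phi>"
  then consider "nonneg_comb \<Delta> (a - d)" | "nonneg_comb \<Delta> (d - a)"
    using root_pos_or_neg by fastforce
  then show False
  proof cases
    case 1
    then have "coeff_root \<Delta> d (a - d) \<ge> 0" using d by (rule nonneg_comb_coeff_root_nonneg)
    then show False using a d \<open>a \<noteq> d\<close> by (simp add: coeff_root_diff coeff_root_simple)
  next
    case 2
    then have "coeff_root \<Delta> a (d - a) \<ge> 0" using a by (rule nonneg_comb_coeff_root_nonneg)
    then show False using a d \<open>a \<noteq> d\<close> by (simp add: coeff_root_diff coeff_root_simple)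
  qed
qed

lemma inner_simple_roots_nonpos: "a \<in> \<Delta> \<Longrightarrow> d \<in> \<Delta> \<Longrightarrow> a \<noteq> d \<Longrightarrow> a \<bullet> d \<le> 0"
  using root_diff_of_inner_pos[of a d] simple_roots_diff_notin_roots simple_roots_subset
  by force

lemma root_diff_two_simple:
  assumes w: "w \<in> \<Phi>" and wa: "w - a \<in> \<Phi>" and wd: "w - d \<in> \<Phi>"
    and a: "a \<in> \<Delta>" and d: "d \<in> \<Delta>" and "a \<noteq> d" and "w - a - d \<noteq> 0"
  shows "w - a - d \<in> \<Phi>"
proof -
  have "a \<in> \<Phi>" "d \<in> \<Phi>" using a d simple_roots_subset by auto
  consider "(w - a) \<bullet> d > 0" | "(w - d) \<bullet> a > 0" | "(w - a) \<bullet> d \<le> 0" "(w - d) \<bullet> a \<le> 0"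
    by linarith
  then show ?thesis
  proof cases
    case 1
    then show ?thesis using root_diff_of_inner_pos[OF wa \<open>d \<in> \<Phi>\<close>] \<open>w - a - d \<noteq> 0\<close> by auto
  next
    case 2
    have "w - d \<noteq> a" using \<open>w - a - d \<noteq> 0\<close> by (auto simp: algebra_simps)
    then have "w - d - a \<in> \<Phi>" using root_diff_of_inner_pos[OF wd \<open>a \<in> \<Phi>\<close> 2] by blast
    then show ?thesis by (simp add: algebra_simps)
  next
    case 3
    have "w \<bullet> w > 0" using w zero_notin_roots by auto
    moreover have "a \<bullet> d \<le> 0" using inner_simple_roots_nonpos[OF a d \<open>a \<noteq> d\<close>] .
    moreover have "(w - d) \<bullet> (w - a) = w \<bullet> w - (w - a) \<bullet> d - (w - d) \<bullet> a - a \<bullet> d"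
      by (simp add: inner_diff inner_commute)
    ultimately have "(w - d) \<bullet> (w - a) > 0" using 3 by linarith
    then have "(w - d) - (w - a) \<in> \<Phi>"
      using root_diff_of_inner_pos[OF wd wa] \<open>a \<noteq> d\<close> by auto
    then show ?thesis using simple_roots_diff_notin_roots[OF a d \<open>a \<noteq> d\<close>] by simp
  qed
qed

lemma pos_root_le_multiple_simple:
  assumes a: "a \<in> \<Delta>" and b: "b \<in> pos_roots \<Phi> \<Delta>" and le: "root_le \<Delta> b (t *\<^sub>R a)"
  shows "b = a"
proof -
  define r where "r = coeff_root \<Delta> a b"
  have "b - r *\<^sub>R a = 0"
  proof (rule eq_zero_if_coeff_root_zero)
    fix e assume e: "e \<in> \<Delta>"
    have "coeff_root \<Delta> e b \<ge> 0" "coeff_root \<Delta> e (t *\<^sub>R a - b) \<ge> 0"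
      using b le e nonneg_comb_coeff_root_nonneg
      unfolding pos_roots_def root_le_def by auto
    then show "coeff_root \<Delta> e (b - r *\<^sub>R a) = 0"
      using a by (auto simp: r_def coeff_root_diff coeff_root_scaleR coeff_root_simple)
  qed
  then have b_eq: "b = r *\<^sub>R a" by simp
  have "r \<ge> 0"
    using a b nonneg_comb_coeff_root_nonneg unfolding r_def pos_roots_def by blast
  moreover have "r = 1 \<or> r = -1"
    using root_multiple_eq[of a r] b_eq a b simple_roots_subset unfolding pos_roots_def by auto
  ultimately show ?thesis using b_eq by auto
qed

lemma root_not_multiple_of_simple:
  assumes a: "a \<in> \<Delta>" and g: "g \<in> \<Phi>" and "c > 0"
    and gc: "g - real c *\<^sub>R a \<in> pos_roots \<Phi> \<Delta>"
  shows "g \<noteq> r *\<^sub>R a"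
proof
  assume g_eq: "g = r *\<^sub>R a"
  have "root_le \<Delta> (g - real c *\<^sub>R a) ((r - real c) *\<^sub>R a)"
    unfolding root_le_def g_eq by (simp add: algebra_simps nonneg_comb_zero)
  then have "g - real c *\<^sub>R a = a"
    using pos_root_le_multiple_simple[OF a gc] by blast
  then have "(1 + real c) *\<^sub>R a \<in> \<Phi>"
    using g by (simp add: algebra_simps)
  then show False
    using root_multiple_eq[of a "1 + real c"] a simple_roots_subset \<open>c > 0\<close> by auto
qed

lemma pos_root_not_le_multiple_simple:
  "a \<in> \<Delta> \<Longrightarrow> b \<in> pos_roots \<Phi> \<Delta> \<Longrightarrow> b \<noteq> a \<Longrightarrow> \<not> root_le \<Delta> b (t *\<^sub>R a)"
  using pos_root_le_multiple_simple by blast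

lemma pos_root_diff_multiple_simple:
  assumes a: "a \<in> \<Delta>" and b: "b \<in> pos_roots \<Phi> \<Delta>" "b \<noteq> a"
    and root: "b - t *\<^sub>R a \<in> \<Phi>"
  shows "b - t *\<^sub>R a \<in> pos_roots \<Phi> \<Delta>"
  using root_pos_or_neg[OF root] root pos_root_not_le_multiple_simple[OF a b, of t]
  unfolding root_le_def pos_roots_def by auto

lemma root_chain_diff_simple:
  assumes a: "a \<in> \<Delta>" and e: "e \<in> \<Delta>" and "a \<noteq> e"
    and chain: "root_chain a c w" and "w - e \<in> \<Phi>"
    and not_multiple: "\<And>k. w - e \<noteq> real k *\<^sub>R a"
  shows "root_chain a c (w - e)"
  unfolding root_chain_def
proof (intro allI)
  fix k show "k \<le> c \<longrightarrow> w - e - real k *\<^sub>R a \<in> \<Phi>"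
  proof (induction k)
    case 0
    then show ?case using \<open>w - e \<in> \<Phi>\<close> by simp
  next
    case (Suc k)
    define v where "v = w - real k *\<^sub>R a"
    have "Suc k \<le> c \<Longrightarrow> v \<in> \<Phi> \<and> v - a \<in> \<Phi> \<and> v - e \<in> \<Phi>"
      using chain Suc unfolding root_chain_def by (auto simp: v_def algebra_simps)
    moreover have "v - a - e \<noteq> 0"
      using not_multiple[of "Suc k"] by (auto simp: v_def algebra_simps)
    ultimately have "Suc k \<le> c \<Longrightarrow> v - a - e \<in> \<Phi>"
      using root_diff_two_simple a e \<open>a \<noteq> e\<close> by blast
    then show ?case by (simp add: v_def algebra_simps)
  qed
qed

lemma root_chain_diff_simple_of_inner_pos:
  assumes a: "a \<in> \<Delta>" and e: "e \<in> \<Delta>" and "a \<noteq> e"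
    and b: "b \<in> pos_roots \<Phi> \<Delta>" "b \<noteq> a" and le: "root_le \<Delta> b (g - e)"
    and chain: "root_chain a c g" and "g \<bullet> e > 0"
  shows "root_chain a c (g - e)"
proof (rule root_chain_diff_simple[OF a e \<open>a \<noteq> e\<close> chain])
  show not_multiple: "g - e \<noteq> real k *\<^sub>R a" for k
    using le pos_root_not_le_multiple_simple[OF a b, of "real k"] by auto
  have "g \<in> \<Phi>" using chain unfolding root_chain_def by force
  moreover have "g \<noteq> e" using not_multiple[of 0] by simp
  ultimately show "g - e \<in> \<Phi>"
    using root_diff_of_inner_pos \<open>g \<bullet> e > 0\<close> e simple_roots_subset by blast
qed

lemma pos_root_add_simple_of_inner_neg:
  assumes a: "a \<in> \<Delta>" and e: "e \<in> \<Delta>" and "a \<noteq> e"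
    and b: "b \<in> pos_roots \<Phi> \<Delta>" and "b \<bullet> e < 0"
  shows "b + e \<in> pos_roots \<Phi> \<Delta>" and "b + e \<noteq> a"
proof -
  have "b \<in> \<Phi>" "nonneg_comb \<Delta> b" "e \<in> \<Phi>"
    using b e simple_roots_subset unfolding pos_roots_def by auto
  have "b \<noteq> - e"
  proof
    assume "b = - e"
    then have "coeff_root \<Delta> e b = -1"
      using coeff_root_add[of e b e] e by (simp add: coeff_root_simple coeff_root_zero)
    then show False
      using nonneg_comb_coeff_root_nonneg[OF \<open>nonneg_comb \<Delta> b\<close> e] by simp
  qed
  then show "b + e \<in> pos_roots \<Phi> \<Delta>"
    using root_add_of_inner_neg[OF \<open>b \<in> \<Phi>\<close> \<open>e \<in> \<Phi>\<close> \<open>b \<bullet> e < 0\<close>]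
      nonneg_comb_add_simple[OF \<open>nonneg_comb \<Delta> b\<close> e]
    unfolding pos_roots_def by simp
  show "b + e \<noteq> a"
    using simple_roots_diff_notin_roots[OF a e \<open>a \<noteq> e\<close>] \<open>b \<in> \<Phi>\<close>
    by (auto simp: algebra_simps)
qed

lemma root_chain_of_add_simple:
  assumes a: "a \<in> \<Delta>" and e: "e \<in> \<Delta>" and "a \<noteq> e"
    and b: "b \<in> pos_roots \<Phi> \<Delta>" "b \<noteq> a" and chain: "root_chain a c (b + e)"
  shows "root_chain a c b"
proof -
  have "b \<noteq> real k *\<^sub>R a" for k
    using pos_root_not_le_multiple_simple[OF a b, of "real k"] nonneg_comb_zero
    unfolding root_le_def by auto
  then show ?thesis
    using root_chain_diff_simple[OF a e \<open>a \<noteq> e\<close> chain] b unfolding pos_roots_def by simp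
qed

lemma root_chain_descends:
  assumes a: "a \<in> \<Delta>" and b: "b \<in> pos_roots \<Phi> \<Delta>" "b \<noteq> a" and le: "root_le \<Delta> b g"
    and coeff: "coeff_root \<Delta> a b = coeff_root \<Delta> a g" and chain: "root_chain a c g"
  shows "root_chain a c b"
proof -
  obtain n where "height (g - b) = real n"
    using nonneg_comb_height_Nats le unfolding root_le_def by (blast elim: Nats_cases)
  then show ?thesis
    using b le coeff chain
  proof (induction n arbitrary: b g)
    case 0
    then have "g = b" using nonneg_comb_height_zero unfolding root_le_def by force
    then show ?case using 0 by blast
  next
    case (Suc n)
    have nonneg: "nonneg_comb \<Delta> (g - b)" using Suc.prems(4) unfolding root_le_def .
    moreover have "g - b \<noteq> 0" using Suc.prems(1) by (auto simp: height_def coeff_root_zero)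
    ultimately obtain e where e: "e \<in> \<Delta>" "coeff_root \<Delta> e (g - b) > 0" "e \<bullet> (g - b) > 0"
      by (rule nonneg_comb_exists_simple_inner_pos)
    have "a \<noteq> e" using e Suc.prems(5) by (auto simp: coeff_root_diff)
    have height_e: "height (g - b - e) = real n"
      using Suc.prems(1) height_diff_simple[OF e(1)] by simp
    have nonneg_e: "nonneg_comb \<Delta> (g - b - e)"
      using nonneg_comb_diff_simple[OF nonneg e(1,2)] .
    have coeff_e: "coeff_root \<Delta> a e = 0"
      using e(1) \<open>a \<noteq> e\<close> by (simp add: coeff_root_simple)
    from e(3) consider "g \<bullet> e > 0" | "b \<bullet> e < 0"
      by (simp add: inner_diff_right inner_commute) linarith
    then show ?case
    proof cases
      case 1
      have "root_le \<Delta> b (g - e)" using nonneg_e unfolding root_le_def by (simp add: algebra_simps)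
      moreover have "root_chain a c (g - e)"
        using root_chain_diff_simple_of_inner_pos[OF a e(1) \<open>a \<noteq> e\<close> Suc.prems(2,3)]
          \<open>root_le \<Delta> b (g - e)\<close> Suc.prems(6) 1 by blast
      moreover have "height (g - e - b) = real n"
        using height_e by (simp add: algebra_simps)
      moreover have "coeff_root \<Delta> a b = coeff_root \<Delta> a (g - e)"
        using Suc.prems(5) coeff_e by (simp add: coeff_root_diff)
      ultimately show ?thesis
        using Suc.IH[where g = "g - e"] Suc.prems(2,3) by blast
    next
      case 2
      note pos = pos_root_add_simple_of_inner_neg[OF a e(1) \<open>a \<noteq> e\<close> Suc.prems(2) 2]
      have "root_le \<Delta> (b + e) g" "height (g - (b + e)) = real n"
        using nonneg_e height_e unfolding root_le_def by (simp_all add: algebra_simps)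
      then have "root_chain a c (b + e)"
        using Suc.IH[where b = "b + e"] pos Suc.prems(5,6) coeff_e by (simp add: coeff_root_add)
      then show ?thesis
        using root_chain_of_add_simple[OF a e(1) \<open>a \<noteq> e\<close> Suc.prems(2,3)] by blast
    qed
  qed
qed

end

theorem lemma4:
  fixes \<Phi> \<Delta> :: "'a::euclidean_space set"
    and \<alpha> \<beta> \<gamma> :: 'a and c :: nat
  assumes "root_system \<Phi>" and "crystallographic \<Phi>" and "reduced \<Phi>"
    and "indecomposable \<Phi>" and "is_base \<Phi> \<Delta>"
    and "\<gamma> \<in> pos_roots \<Phi> \<Delta>" and "\<alpha> \<in> \<Delta>" and "c > 0"
    and "\<gamma> - real c *\<^sub>R \<alpha> \<in> pos_roots \<Phi> \<Delta>"
    and "\<beta> \<in> pos_roots \<Phi> \<Delta>" and "root_le \<Delta> \<beta> \<gamma>"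
    and "coeff_root \<Delta> \<alpha> \<beta> = coeff_root \<Delta> \<alpha> \<gamma>" and "\<beta> \<noteq> \<alpha>"
  shows "\<beta> - real c *\<^sub>R \<alpha> \<in> pos_roots \<Phi> \<Delta>"
proof -
  interpret reduced_root_system_with_base \<Phi> \<Delta>
    using assms(1-3,5) by unfold_locales
  have "\<alpha> \<in> \<Phi>" "\<gamma> \<in> \<Phi>" "\<gamma> - real c *\<^sub>R \<alpha> \<in> \<Phi>"
    using assms(6,7,9) simple_roots_subset unfolding pos_roots_def by auto
  then have "root_chain \<alpha> c \<gamma>"
    using root_string_unbroken root_not_multiple_of_simple[OF assms(7) _ assms(8,9)] by blast
  then have "root_chain \<alpha> c \<beta>"
    using root_chain_descends[OF assms(7,10,13,11,12)] by blast
  then have "\<beta> - real c *\<^sub>R \<alpha> \<in> \<Phi>"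
    unfolding root_chain_def by blast
  then show ?thesis
    using pos_root_diff_multiple_simple[OF assms(7,10,13)] by blast
qed

end
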